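(* Identify $\mathbb{S}^2$ with $\mathbb{C}\cup\{\infty\}$ and $\mathbb{C}^2$ with $\mathbb{R}^4$, and define $f:\mathbb{S}^2\to\mathbb{C}^2$ by $$f(z)=\left(\bar z\,\frac{|z|^4-1}{|z|^6+1},\; z^2\,\frac{|z|^2+1}{|z|^6+1}\right).$$ Then $f(\mathbb{S}^2)$ is the Veronese surface, up to a conformal transformation of $\mathbb{R}^4$.
   Context: The Veronese surface in $\mathbb{R}^4$ is the image (under stereographic projection $\mathbb{S}^4\setminus\{pt\}\to\mathbb{R}^4$) of the Veronese embedding of $\mathbb{R}P^2$ into $\mathbb{S}^4\subset\mathbb{R}^5$, $[x,y,z]\mapsto\big(\sqrt3\, yz,\sqrt3\, xz,\sqrt3\, xy,\tfrac{\sqrt3}{2}(x^2-y^2),\tfrac12(x^2+y^2-2z^2)\big)$ for $x^2+y^2+z^2=1$; "up to conformal transformation" means the surfaces agree after applying some conformal (Möbius) transformation of $\mathbb{R}^4\cup\{\infty\}$. The map $f$ extends continuously to $z=\infty$. *)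

theory Defs
  imports "HOL-Analysis.Analysis"
begin

text \<open>The one-point compactification \<open>'a \<union> {\<infinity>}\<close> is modelled by \<open>'a option\<close>,
  with \<open>None\<close> playing the role of the point at infinity.\<close>

definition unit_inversion_ext :: "'a::real_normed_vector option \<Rightarrow> 'a option" where
  "unit_inversion_ext p =
     (case p of None \<Rightarrow> Some 0
      | Some x \<Rightarrow> if x = 0 then None else Some (x /\<^sub>R (norm x)\<^sup>2))"

text \<open>Conformal (Moebius) transformations of \<open>'a \<union> {\<infinity>}\<close>: the group generated
  by similarities \<open>x \<mapsto> c A x + b\<close> (A orthogonal, c > 0, fixing \<infinity>) and the
  inversion in the unit sphere.\<close>
inductive_set moebius_ext :: "('a::euclidean_space option \<Rightarrow> 'a option) set" where
  identity: "id \<in> moebius_ext"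
| similarity: "\<lbrakk>orthogonal_transformation A; c > 0; g \<in> moebius_ext\<rbrakk>
      \<Longrightarrow> map_option (\<lambda>x. c *\<^sub>R A x + b) \<circ> g \<in> moebius_ext"
| inversion: "g \<in> moebius_ext \<Longrightarrow> unit_inversion_ext \<circ> g \<in> moebius_ext"

definition f_fin :: "complex \<Rightarrow> complex \<times> complex" where
  "f_fin z =
     (cnj z * complex_of_real ((cmod z ^ 4 - 1) / (cmod z ^ 6 + 1)),
      z\<^sup>2 * complex_of_real ((cmod z ^ 2 + 1) / (cmod z ^ 6 + 1)))"

definition f_map :: "complex option \<Rightarrow> complex \<times> complex" where
  "f_map p = (case p of None \<Rightarrow> Lim at_infinity f_fin | Some z \<Rightarrow> f_fin z)"

text \<open>Veronese embedding of \<open>S\<^sup>2 \<subseteq> \<real>\<^sup>3\<close> (hence of \<open>\<real>P\<^sup>2\<close>) into \<open>S\<^sup>4 \<subseteq> \<real>\<^sup>5\<close>.\<close>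
definition veronese_S4 :: "real \<Rightarrow> real \<Rightarrow> real \<Rightarrow> real \<times> real \<times> real \<times> real \<times> real" where
  "veronese_S4 x y z =
     (sqrt 3 * y * z, sqrt 3 * x * z, sqrt 3 * x * y,
      sqrt 3 / 2 * (x\<^sup>2 - y\<^sup>2), 1/2 * (x\<^sup>2 + y\<^sup>2 - 2 * z\<^sup>2))"

text \<open>Stereographic projection \<open>S\<^sup>4 \ {e\<^sub>5} \<rightarrow> \<real>\<^sup>4\<close> from the north pole
  \<open>e\<^sub>5 = (0,0,0,0,1)\<close>, with \<open>\<real>\<^sup>4\<close> identified with \<open>\<complex>\<^sup>2\<close> via
  \<open>(u\<^sub>1,u\<^sub>2,u\<^sub>3,u\<^sub>4) \<mapsto> (u\<^sub>1 + i u\<^sub>2, u\<^sub>3 + i u\<^sub>4)\<close>.\<close>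
definition stereo_S4 :: "real \<times> real \<times> real \<times> real \<times> real \<Rightarrow> complex \<times> complex" where
  "stereo_S4 u = (case u of (u1, u2, u3, u4, u5) \<Rightarrow>
     (Complex (u1 / (1 - u5)) (u2 / (1 - u5)), Complex (u3 / (1 - u5)) (u4 / (1 - u5))))"

definition veronese_surface :: "(complex \<times> complex) set" where
  "veronese_surface =
     {stereo_S4 (veronese_S4 x y z) | x y z. x\<^sup>2 + y\<^sup>2 + z\<^sup>2 = 1}"

end

theory Submission
  imports Defs
begin

text \<open>Let \<open>\<sigma>\<^sup>-\<^sup>1(a + b i) = (2a, 2b, r - 1) / (1 + r)\<close>, \<open>r = a\<^sup>2 + b\<^sup>2\<close>, be the inverse
  stereographic projection \<open>\<complex> \<rightarrow> S\<^sup>2\<close>. A direct computation shows that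
  \<open>\<surd>3 \<cdot> R \<circ> f = stereo \<circ> veronese \<circ> \<sigma>\<^sup>-\<^sup>1\<close> on \<open>\<complex>\<close>, where \<open>R (z, w) = (i z, i w\<^sup>*)\<close> is an
  isometry of \<open>\<real>\<^sup>4\<close>; both sides have denominator \<open>r\<^sup>2 - r + 1\<close>, which comes from
  \<open>|z|\<^sup>6 + 1 = (r + 1)(r\<^sup>2 - r + 1)\<close>. Since \<open>\<sigma>\<^sup>-\<^sup>1\<close> covers the sphere minus the north
  pole, and the Veronese map identifies the north pole with the south pole \<open>\<sigma>\<^sup>-\<^sup>1(0)\<close>,
  the image of \<open>f\<close> on \<open>\<complex>\<close> is already the whole Veronese surface; the value
  \<open>f(\<infinity>) = 0 = f(0)\<close> adds nothing.\<close>

definition rotate_conj :: "complex \<times> complex \<Rightarrow> complex \<times> complex" where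
  "rotate_conj p = (\<i> * fst p, \<i> * cnj (snd p))"

lemma orthogonal_transformation_rotate_conj: "orthogonal_transformation rotate_conj"
proof -
  have "linear rotate_conj"
    by (rule linearI) (auto simp: rotate_conj_def algebra_simps complex_eq_iff)
  moreover have "norm (rotate_conj v) = norm v" for v
    by (cases v) (simp add: rotate_conj_def norm_Pair norm_mult)
  ultimately show ?thesis
    by (simp add: orthogonal_transformation)
qed

lemma norm_f_fin_le:
  assumes "cmod w \<ge> 1"
  shows "norm (f_fin w) \<le> 3 / cmod w"
proof -
  define s where "s = cmod w"
  have s1: "s \<ge> 1"
    using assms by (simp add: s_def)
  then have den_pos: "s^6 + 1 > 0"
    by (smt (verit) zero_le_power)
  have "norm (fst (f_fin w)) = cmod (cnj w) * \<bar>(s^4 - 1) / (s^6 + 1)\<bar>"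
    unfolding f_fin_def s_def[symmetric] by (simp only: fst_conv norm_mult norm_of_real)
  then have norm_fst: "norm (fst (f_fin w)) = s * (s^4 - 1) / (s^6 + 1)"
    using s1 den_pos by (simp add: s_def one_le_power)
  have "norm (snd (f_fin w)) = cmod w ^ 2 * \<bar>(s^2 + 1) / (s^6 + 1)\<bar>"
    unfolding f_fin_def by (simp only: snd_conv norm_mult norm_of_real norm_power s_def)
  then have norm_snd: "norm (snd (f_fin w)) = s^2 * (s^2 + 1) / (s^6 + 1)"
    using den_pos by (simp add: s_def)
  have "s * (s * (s^4 - 1)) \<le> s^6 + 1"
    using zero_le_power2[of s] by (simp add: algebra_simps flip: power_Suc power_add)
  then have fst_le: "s * (s^4 - 1) / (s^6 + 1) \<le> 1 / s"
    using den_pos s1 by (simp add: field_simps)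
  have "s^5 \<le> s^6" "s^3 \<le> s^6"
    using s1 by (simp_all add: power_increasing)
  then have "s * (s^2 * (s^2 + 1)) \<le> 2 * (s^6 + 1)"
    by (simp add: algebra_simps flip: power_Suc power_add)
  then have snd_le: "s^2 * (s^2 + 1) / (s^6 + 1) \<le> 2 / s"
    using den_pos s1 by (simp add: field_simps)
  have "norm (f_fin w) \<le> norm (fst (f_fin w)) + norm (snd (f_fin w))"
    by (metis norm_Pair_le prod.collapse)
  also have "\<dots> \<le> 3 / s"
    using norm_fst norm_snd fst_le snd_le by simp
  finally show ?thesis
    by (simp add: s_def)
qed

lemma f_fin_tendsto_at_infinity: "(f_fin \<longlongrightarrow> 0) at_infinity"
proof (rule Lim_null_comparison)
  show "\<forall>\<^sub>F w in at_infinity. norm (f_fin w) \<le> 3 / cmod w"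
    using eventually_at_infinity norm_f_fin_le by blast
  show "((\<lambda>w. 3 / cmod w) \<longlongrightarrow> 0) at_infinity"
    by (rule tendsto_divide_0[OF tendsto_const
          filterlim_norm_at_top[THEN filterlim_at_top_imp_at_infinity]])
qed

lemma f_map_None: "f_map None = 0"
  using tendsto_Lim[OF trivial_limit_at_infinity f_fin_tendsto_at_infinity]
  by (simp add: f_map_def)

lemma f_fin_0: "f_fin 0 = 0"
  by (simp add: f_fin_def zero_prod_def)

lemma range_f_map: "range f_map = range f_fin"
proof -
  have "range f_map = insert (f_map None) (f_map ` range Some)"
    by (simp add: UNIV_option_conv)
  also have "\<dots> = insert (f_fin 0) (range f_fin)"
    by (simp add: f_map_None f_fin_0 f_map_def[of "Some _"] image_image)
  also have "\<dots> = range f_fin"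
    by blast
  finally show ?thesis .
qed

lemma inv_stereo_in_sphere:
  fixes a b :: real
  defines "r \<equiv> a\<^sup>2 + b\<^sup>2"
  shows "(2*a/(1+r))\<^sup>2 + (2*b/(1+r))\<^sup>2 + ((r-1)/(1+r))\<^sup>2 = 1"
proof -
  have "1 + r > 0"
    unfolding r_def by (simp add: add_pos_nonneg)
  then show ?thesis
    unfolding r_def by (simp add: field_simps) algebra
qed

lemma inv_stereo_stereo:
  fixes x y z :: real
  assumes "x\<^sup>2 + y\<^sup>2 + z\<^sup>2 = 1" and "z \<noteq> 1"
  defines "a \<equiv> x / (1 - z)" and "b \<equiv> y / (1 - z)"
  defines "r \<equiv> a\<^sup>2 + b\<^sup>2"
  shows "2*a/(1+r) = x" and "2*b/(1+r) = y" and "(r-1)/(1+r) = z"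
proof -
  have nz: "1 - z \<noteq> 0"
    using assms(2) by simp
  have "x\<^sup>2 + y\<^sup>2 = (1 - z) * (1 + z)"
    using assms(1) by algebra
  then have r: "r = (1 + z) / (1 - z)"
    using nz by (simp add: r_def a_def b_def power_divide power2_eq_square
        flip: add_divide_distrib)
  have p: "1 + r = 2 / (1 - z)" and m: "r - 1 = 2 * z / (1 - z)"
    using nz by (simp_all add: r field_simps)
  show "2*a/(1+r) = x" and "2*b/(1+r) = y" and "(r-1)/(1+r) = z"
    unfolding p m a_def b_def using nz by (simp_all add: field_simps)
qed

lemma veronese_S4_antipodal: "veronese_S4 (-x) (-y) (-z) = veronese_S4 x y z"
  by (simp add: veronese_S4_def)

lemma cmod_Complex_powers:
  "cmod (Complex a b) ^ 2 = a\<^sup>2 + b\<^sup>2"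
  "cmod (Complex a b) ^ 4 = (a\<^sup>2 + b\<^sup>2)^2"
  "cmod (Complex a b) ^ 6 = (a\<^sup>2 + b\<^sup>2)^3"
proof -
  show sq: "cmod (Complex a b) ^ 2 = a\<^sup>2 + b\<^sup>2"
    by (simp add: cmod_power2)
  have "cmod (Complex a b) ^ 4 = (cmod (Complex a b) ^ 2)\<^sup>2"
    "cmod (Complex a b) ^ 6 = (cmod (Complex a b) ^ 2)^3"
    by algebra+
  then show "cmod (Complex a b) ^ 4 = (a\<^sup>2 + b\<^sup>2)^2" "cmod (Complex a b) ^ 6 = (a\<^sup>2 + b\<^sup>2)^3"
    by (simp_all only: sq)
qed

lemma rotate_f_fin_eq_veronese:
  fixes a b :: real
  defines "r \<equiv> a\<^sup>2 + b\<^sup>2"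
  shows "sqrt 3 *\<^sub>R rotate_conj (f_fin (Complex a b)) =
     stereo_S4 (veronese_S4 (2*a/(1+r)) (2*b/(1+r)) ((r-1)/(1+r)))"
proof -
  define p where "p = 1 + r"
  define d where "d = r\<^sup>2 - r + 1"
  have p_pos: "p > 0"
    by (simp add: p_def r_def add_pos_nonneg)
  have "d = (r - 1/2)\<^sup>2 + 3/4"
    unfolding d_def power2_eq_square by (simp add: field_simps)
  then have d_pos: "d > 0"
    using zero_le_power2[of "r - 1/2"] by linarith
  have cube: "r^3 + 1 = p * d" "1 + r^3 = p * d"
    by (simp_all add: p_def d_def power2_eq_square power3_eq_cube algebra_simps)
  have square: "r\<^sup>2 - 1 = (r - 1) * p"
    by (simp add: p_def power2_eq_square algebra_simps)
  have p: "r + 1 = p" "1 + r = p"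
    by (simp_all add: p_def)
  have xy: "(2*a/p)\<^sup>2 + (2*b/p)\<^sup>2 = 4*r/p^2"
    by (simp add: r_def power_divide power_mult_distrib add_divide_distrib)
  have stereo_denom: "1 - 1/2 * ((2*a/p)\<^sup>2 + (2*b/p)\<^sup>2 - 2 * ((r-1)/p)\<^sup>2) = 2*d/p^2"
    unfolding xy power_divide[of "r - 1"] using p_pos
    by (simp add: field_simps) (unfold d_def p_def, algebra)
  show ?thesis
    unfolding rotate_conj_def f_fin_def stereo_S4_def veronese_S4_def cmod_Complex_powers
      r_def[symmetric] p_def[symmetric]
    using p_pos d_pos
    by (simp only: stereo_denom prod.case)
      (simp add: prod_eq_iff complex_eq_iff cube p square power2_eq_square field_simps;
       simp add: p_def algebra_simps power2_eq_square)
qed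

lemma rotate_range_f_fin: "(\<lambda>p. sqrt 3 *\<^sub>R rotate_conj p) ` range f_fin = veronese_surface"
proof
  have "sqrt 3 *\<^sub>R rotate_conj (f_fin w) \<in> veronese_surface" for w
    using rotate_f_fin_eq_veronese[of "Re w" "Im w"] inv_stereo_in_sphere[of "Re w" "Im w"]
    by (auto simp: veronese_surface_def)
  then show "(\<lambda>p. sqrt 3 *\<^sub>R rotate_conj p) ` range f_fin \<subseteq> veronese_surface"
    by blast
next
  have "stereo_S4 (veronese_S4 x y z) \<in> (\<lambda>p. sqrt 3 *\<^sub>R rotate_conj p) ` range f_fin"
    if sphere: "x\<^sup>2 + y\<^sup>2 + z\<^sup>2 = 1" for x y z
  proof (cases "z = 1")
    case True
    then have "x\<^sup>2 + y\<^sup>2 = 0"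
      using sphere by simp
    then have "x = 0" "y = 0"
      by (simp_all add: sum_power2_eq_zero_iff)
    then have "stereo_S4 (veronese_S4 x y z) = sqrt 3 *\<^sub>R rotate_conj (f_fin (Complex 0 0))"
      using True by (simp add: rotate_f_fin_eq_veronese veronese_S4_antipodal[of 0 0 "-1", simplified])
    then show ?thesis
      by blast
  next
    case False
    then have "stereo_S4 (veronese_S4 x y z) =
        sqrt 3 *\<^sub>R rotate_conj (f_fin (Complex (x / (1 - z)) (y / (1 - z))))"
      using inv_stereo_stereo[OF sphere False] by (simp add: rotate_f_fin_eq_veronese)
    then show ?thesis
      by blast
  qed
  then show "veronese_surface \<subseteq> (\<lambda>p. sqrt 3 *\<^sub>R rotate_conj p) ` range f_fin"
    by (auto simp: veronese_surface_def)
qed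

theorem proposition1p3:
  shows "\<exists>\<phi> \<in> moebius_ext. \<phi> ` (Some ` (f_map ` UNIV)) = Some ` veronese_surface"
proof
  let ?\<phi> = "map_option (\<lambda>p. sqrt 3 *\<^sub>R rotate_conj p + 0) \<circ> id"
  show "?\<phi> \<in> moebius_ext"
    by (rule moebius_ext.similarity[OF orthogonal_transformation_rotate_conj _ moebius_ext.identity])
      simp
  have "?\<phi> ` Some ` range f_map = Some ` (\<lambda>p. sqrt 3 *\<^sub>R rotate_conj p) ` range f_fin"
    by (simp add: range_f_map image_image)
  then show "?\<phi> ` Some ` range f_map = Some ` veronese_surface"
    by (simp add: rotate_range_f_fin)
qed

end
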